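(* There is an absolute constant $C$ such that the following holds. Let $e_1,\dots,e_k\in\mathbb{C}^{n\times n}$ be an anticommuting family with $e_1^2,\dots,e_k^2\neq 0$. Then $k\le Cn$.
   Context: A family $e_1,\dots,e_k$ of complex $n\times n$ matrices is called anticommuting if $e_ie_j=-e_je_i$ for all distinct $i,j\in\{1,\dots,k\}$. *)

theory Defs
  imports "Jordan_Normal_Form.Matrix"
begin

definition anticommuting :: "nat \<Rightarrow> nat \<Rightarrow> (nat \<Rightarrow> complex mat) \<Rightarrow> bool" where
  "anticommuting n k e \<longleftrightarrow>
     (\<forall>i<k. e i \<in> carrier_mat n n) \<and>
     (\<forall>i<k. \<forall>j<k. i \<noteq> j \<longrightarrow> e i * e j = - (e j * e i))"

end

theory Submission
  imports Defs "HOL-Computational_Algebra.Polynomial"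
begin

text \<open>Since the field is infinite, there are vectors \<open>x, y\<close> with \<open>x\<^sup>T e\<^sub>i\<^sup>2 y \<noteq> 0\<close>
  for all \<open>i\<close> at once. If \<open>k > 2n\<close>, some nonzero combination \<open>f = \<Sum>\<^sub>j z\<^sub>j e\<^sub>j\<close>
  satisfies the \<open>2n\<close> linear conditions \<open>f y = 0\<close> and \<open>x\<^sup>T f = 0\<close>. By
  anticommutation \<open>e\<^sub>i f + f e\<^sub>i = 2 z\<^sub>i e\<^sub>i\<^sup>2\<close>, so
  \<open>0 = x\<^sup>T (e\<^sub>i f + f e\<^sub>i) y = 2 z\<^sub>i x\<^sup>T e\<^sub>i\<^sup>2 y\<close> forces every \<open>z\<^sub>i = 0\<close>.
  Hence \<open>k \<le> 2n\<close>.\<close>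

lemma homogeneous_system_nontrivial_solution:
  fixes L :: "nat \<Rightarrow> 'b \<Rightarrow> 'a::field"
  assumes "finite J" "m < card J"
  shows "\<exists>z. (\<exists>j\<in>J. z j \<noteq> 0) \<and> (\<forall>r<m. (\<Sum>j\<in>J. z j * L r j) = 0)"
  using assms
proof (induction m arbitrary: J L)
  case 0
  then obtain j0 where "j0 \<in> J" by fastforce
  then show ?case by (intro exI[of _ "\<lambda>_. 1"]) auto
next
  case (Suc m)
  show ?case
  proof (cases "\<exists>p\<in>J. L m p \<noteq> 0")
    case False
    with Suc show ?thesis by (auto simp: less_Suc_eq)
  next
    case True
    then obtain p where p: "p \<in> J" "L m p \<noteq> 0" by blast
    define L' where "L' = (\<lambda>r j. L r j - L r p / L m p * L m j)"
    have "m < card (J - {p})" using Suc.prems p by auto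
    with Suc.IH[of "J - {p}" L'] Suc.prems(1) obtain z' where
      z': "\<exists>j\<in>J - {p}. z' j \<noteq> 0" "\<forall>r<m. (\<Sum>j\<in>J - {p}. z' j * L' r j) = 0" by blast
    define S where "S = (\<Sum>j\<in>J - {p}. z' j * L m j)"
    define z where "z = (\<lambda>j. if j = p then - S / L m p else z' j)"
    have sum_z: "(\<Sum>j\<in>J. z j * L r j) = z p * L r p + (\<Sum>j\<in>J - {p}. z' j * L r j)" for r
      using Suc.prems(1) p(1) by (simp add: sum.remove[of J p] z_def)
    have "(\<Sum>j\<in>J. z j * L r j) = 0" if "r < Suc m" for r
    proof (cases "r = m")
      case True
      then show ?thesis using p(2) sum_z[of m] by (simp add: z_def S_def)
    next
      case False
      then have "0 = (\<Sum>j\<in>J - {p}. z' j * L' r j)" using z' that by auto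
      also have "\<dots> = (\<Sum>j\<in>J - {p}. z' j * L r j) - L r p / L m p * S"
        unfolding L'_def S_def by (simp add: algebra_simps sum_subtractf sum_distrib_left)
      finally show ?thesis using p(2) sum_z[of r] by (simp add: z_def field_simps)
    qed
    moreover have "\<exists>j\<in>J. z j \<noteq> 0" using z' by (auto simp: z_def)
    ultimately show ?thesis by blast
  qed
qed

definition bilinear_form :: "'a::comm_semiring_0 mat \<Rightarrow> (nat \<Rightarrow> 'a) \<Rightarrow> (nat \<Rightarrow> 'a) \<Rightarrow> 'a" where
  "bilinear_form A x y = (\<Sum>a<dim_row A. \<Sum>b<dim_col A. x a * A $$ (a,b) * y b)"

lemma bilinear_form_unit_vectors:
  fixes A :: "'a::comm_semiring_1 mat"
  assumes "a < dim_row A" "b < dim_col A"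
  shows "bilinear_form A (\<lambda>i. if i = a then 1 else 0) (\<lambda>j. if j = b then 1 else 0) = A $$ (a,b)"
proof -
  have "(if i = a then 1 else 0) * A $$ (i,j) * (if j = b then 1 else 0) =
      (if j = b then if i = a then A $$ (i,j) else 0 else 0)" for i j
    by simp
  with assms show ?thesis by (simp add: bilinear_form_def)
qed

lemma bilinear_form_nonzero:
  fixes A :: "'a::comm_semiring_1 mat"
  assumes "A \<noteq> 0\<^sub>m (dim_row A) (dim_col A)"
  shows "\<exists>x y. bilinear_form A x y \<noteq> 0"
proof -
  have "\<exists>a<dim_row A. \<exists>b<dim_col A. A $$ (a,b) \<noteq> 0"
  proof (rule ccontr)
    assume "\<not> ?thesis"
    then have "A = 0\<^sub>m (dim_row A) (dim_col A)" by (intro eq_matI) auto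
    with assms show False ..
  qed
  then obtain a b where "a < dim_row A" "b < dim_col A" "A $$ (a,b) \<noteq> 0" by blast
  then have "bilinear_form A (\<lambda>i. if i = a then 1 else 0) (\<lambda>j. if j = b then 1 else 0) \<noteq> 0"
    by (simp add: bilinear_form_unit_vectors)
  then show ?thesis by blast
qed

lemma bilinear_form_uminus:
  "bilinear_form (- A) x y = - bilinear_form (A :: 'a::comm_ring mat) x y"
  by (simp add: bilinear_form_def sum_negf)

lemma bilinear_form_add_scaled:
  "bilinear_form A (\<lambda>a. x a + t * x' a) (\<lambda>b. y b + t * y' b) =
   bilinear_form A x y + t * ((bilinear_form A x y' + bilinear_form A x' y) + t * bilinear_form A x' y')"
  unfolding bilinear_form_def by (simp add: algebra_simps sum.distrib sum_distrib_left)

lemma bilinear_form_mult: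
  assumes "A \<in> carrier_mat r m" "B \<in> carrier_mat m s"
  shows "bilinear_form (A * B) x y =
    (\<Sum>c<m. (\<Sum>a<r. x a * A $$ (a,c)) * (\<Sum>b<s. B $$ (c,b) * y b))"
proof -
  have "bilinear_form (A * B) x y = (\<Sum>a<r. \<Sum>b<s. \<Sum>c<m. x a * A $$ (a,c) * (B $$ (c,b) * y b))"
    using assms by (simp add: bilinear_form_def scalar_prod_def atLeast0LessThan
        sum_distrib_left sum_distrib_right mult_ac)
  also have "\<dots> = (\<Sum>a<r. \<Sum>c<m. \<Sum>b<s. x a * A $$ (a,c) * (B $$ (c,b) * y b))"
    by (intro sum.cong refl sum.swap)
  also have "\<dots> = (\<Sum>c<m. \<Sum>a<r. \<Sum>b<s. x a * A $$ (a,c) * (B $$ (c,b) * y b))"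
    by (rule sum.swap)
  finally show ?thesis by (simp add: sum_product mult_ac)
qed

lemma bilinear_forms_simultaneously_nonzero:
  fixes A :: "'i \<Rightarrow> 'a::{idom,ring_char_0} mat"
  assumes "finite I" "\<forall>i\<in>I. \<exists>x y. bilinear_form (A i) x y \<noteq> 0"
  shows "\<exists>x y. \<forall>i\<in>I. bilinear_form (A i) x y \<noteq> 0"
  using assms
proof (induction I rule: finite_induct)
  case empty
  then show ?case by simp
next
  case (insert i I)
  then obtain x y where xy: "\<forall>j\<in>I. bilinear_form (A j) x y \<noteq> 0" by auto
  from insert.prems obtain x' y' where x'y': "bilinear_form (A i) x' y' \<noteq> 0" by auto
  define P where "P j = [:bilinear_form (A j) x y,
    bilinear_form (A j) x y' + bilinear_form (A j) x' y, bilinear_form (A j) x' y':]" for j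
  have "P j \<noteq> 0" if "j \<in> insert i I" for j
    using that xy x'y' by (auto simp: P_def)
  then have "finite {t. poly (P j) t = 0}" if "j \<in> insert i I" for j
    using that poly_roots_finite by blast
  then have "finite (\<Union>j\<in>insert i I. {t. poly (P j) t = 0})"
    using insert.hyps(1) by blast
  then obtain t where "t \<notin> (\<Union>j\<in>insert i I. {t. poly (P j) t = 0})"
    using ex_new_if_finite[OF infinite_UNIV_char_0] by blast
  \<comment> \<open>Moving along the line \<open>(x + t x', y + t y')\<close> each form is a nonzero quadratic in \<open>t\<close>.\<close>
  then have "\<forall>j\<in>insert i I. bilinear_form (A j) (\<lambda>a. x a + t * x' a) (\<lambda>b. y b + t * y' b) \<noteq> 0"
    by (auto simp: bilinear_form_add_scaled P_def)
  then show ?case by blast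
qed

lemma anticommuting_annihilated_combination:
  fixes e :: "nat \<Rightarrow> 'a::field_char_0 mat"
  assumes carrier: "\<forall>i<k. e i \<in> carrier_mat n n"
    and anticomm: "\<forall>i<k. \<forall>j<k. i \<noteq> j \<longrightarrow> e i * e j = - (e j * e i)"
    and col_kernel: "\<forall>c<n. (\<Sum>j<k. z j * (\<Sum>b<n. e j $$ (c,b) * y b)) = 0"
    and row_kernel: "\<forall>c<n. (\<Sum>j<k. z j * (\<Sum>a<n. x a * e j $$ (a,c))) = 0"
    and "i < k"
  shows "z i * bilinear_form (e i * e i) x y = 0"
proof -
  define row where "row j c = (\<Sum>a<n. x a * e j $$ (a,c))" for j c
  define col where "col j c = (\<Sum>b<n. e j $$ (c,b) * y b)" for j c
  have form_product: "bilinear_form (e j * e l) x y = (\<Sum>c<n. row j c * col l c)"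
    if "j < k" "l < k" for j l
    using bilinear_form_mult[of "e j" n n "e l" n] carrier that unfolding row_def col_def by simp
  let ?anticomm = "\<lambda>j. bilinear_form (e i * e j) x y + bilinear_form (e j * e i) x y"
  have "(\<Sum>j<k. z j * ?anticomm j) = z i * ?anticomm i + (\<Sum>j\<in>{..<k} - {i}. z j * ?anticomm j)"
    using \<open>i < k\<close> by (intro sum.remove) auto
  moreover have "(\<Sum>j\<in>{..<k} - {i}. z j * ?anticomm j) = 0"
  proof (intro sum.neutral ballI)
    fix j assume "j \<in> {..<k} - {i}"
    then have "e j * e i = - (e i * e j)"
      using anticomm[rule_format, of j i] \<open>i < k\<close> by simp
    then show "z j * ?anticomm j = 0" by (simp add: bilinear_form_uminus)
  qed
  ultimately have "z i * (2 * bilinear_form (e i * e i) x y) = (\<Sum>j<k. z j * ?anticomm j)"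
    by (simp only: mult_2 add_0_right)
  also have "\<dots> = (\<Sum>j<k. z j * (\<Sum>c<n. row i c * col j c))
      + (\<Sum>j<k. z j * (\<Sum>c<n. row j c * col i c))"
    using \<open>i < k\<close> by (simp add: form_product distrib_left sum.distrib)
  also have "\<dots> = (\<Sum>c<n. row i c * (\<Sum>j<k. z j * col j c))
      + (\<Sum>c<n. (\<Sum>j<k. z j * row j c) * col i c)"
    unfolding sum_distrib_left sum_distrib_right by (subst (1 2) sum.swap) (simp add: mult_ac)
  also have "\<dots> = 0"
    using row_kernel col_kernel unfolding row_def col_def by simp
  finally show ?thesis by simp
qed

lemma anticommuting_family_card_le:
  fixes e :: "nat \<Rightarrow> 'a::field_char_0 mat"
  assumes carrier: "\<forall>i<k. e i \<in> carrier_mat n n"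
    and anticomm: "\<forall>i<k. \<forall>j<k. i \<noteq> j \<longrightarrow> e i * e j = - (e j * e i)"
    and square_nonzero: "\<forall>i<k. e i * e i \<noteq> 0\<^sub>m n n"
  shows "k \<le> 2 * n"
proof (rule ccontr)
  assume "\<not> k \<le> 2 * n"
  have "\<forall>i\<in>{..<k}. \<exists>x y. bilinear_form (e i * e i) x y \<noteq> 0"
  proof
    fix i assume "i \<in> {..<k}"
    then have "dim_row (e i * e i) = n" "dim_col (e i * e i) = n" "e i * e i \<noteq> 0\<^sub>m n n"
      using carrier square_nonzero by auto
    then show "\<exists>x y. bilinear_form (e i * e i) x y \<noteq> 0"
      using bilinear_form_nonzero[of "e i * e i"] by argo
  qed
  then obtain x y where xy: "\<forall>i<k. bilinear_form (e i * e i) x y \<noteq> 0"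
    using bilinear_forms_simultaneously_nonzero[of "{..<k}" "\<lambda>i. e i * e i"] by auto
  \<comment> \<open>Row \<open>r\<close> of \<open>L\<close> is entry \<open>r\<close> of \<open>f y\<close> or entry \<open>r - n\<close> of \<open>x\<^sup>T f\<close>, as a linear function of
    the coefficients \<open>z\<close> of \<open>f = \<Sum>\<^sub>j z\<^sub>j e\<^sub>j\<close>.\<close>
  define L where "L r j = (if r < n then \<Sum>b<n. e j $$ (r,b) * y b else \<Sum>a<n. x a * e j $$ (a, r - n))"
    for r j
  obtain z where z_nonzero: "\<exists>j\<in>{..<k}. z j \<noteq> 0"
    and z_kernel: "\<forall>r<2 * n. (\<Sum>j<k. z j * L r j) = 0"
    using homogeneous_system_nontrivial_solution[of "{..<k}" "2 * n" L] \<open>\<not> k \<le> 2 * n\<close> by auto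
  have col_kernel: "\<forall>c<n. (\<Sum>j<k. z j * (\<Sum>b<n. e j $$ (c,b) * y b)) = 0"
  proof (intro allI impI)
    fix c assume "c < n"
    then show "(\<Sum>j<k. z j * (\<Sum>b<n. e j $$ (c,b) * y b)) = 0"
      using z_kernel[rule_format, of c] by (simp add: L_def)
  qed
  have row_kernel: "\<forall>c<n. (\<Sum>j<k. z j * (\<Sum>a<n. x a * e j $$ (a,c))) = 0"
  proof (intro allI impI)
    fix c assume "c < n"
    then show "(\<Sum>j<k. z j * (\<Sum>a<n. x a * e j $$ (a,c))) = 0"
      using z_kernel[rule_format, of "n + c"] by (simp add: L_def)
  qed
  have "z i = 0" if "i < k" for i
    using anticommuting_annihilated_combination[OF carrier anticomm col_kernel row_kernel that]
      xy that by simp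
  with z_nonzero show False by auto
qed

theorem theorem2:
  shows "\<exists>C::real. \<forall>n k (e :: nat \<Rightarrow> complex mat).
           anticommuting n k e \<and> (\<forall>i<k. e i * e i \<noteq> 0\<^sub>m n n)
           \<longrightarrow> real k \<le> C * real n"
proof (intro exI[of _ 2] allI impI)
  fix n k and e :: "nat \<Rightarrow> complex mat"
  assume "anticommuting n k e \<and> (\<forall>i<k. e i * e i \<noteq> 0\<^sub>m n n)"
  then have "k \<le> 2 * n"
    using anticommuting_family_card_le[of k e n] unfolding anticommuting_def by blast
  then show "real k \<le> 2 * real n" by simp
qed

end
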